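(* Let $d\ge2$, $n\ge1$, $\gamma$ a positive conductivity on the lattice graph below, and $d\le t\le dn-1$. Then $\ker T_1^{(t-1)}\subseteq\ker T_1^{(t)}$, where $\mathbb R^{J_{t-1}^{\mathcal S}}$ is regarded as a subspace of $\mathbb R^{J_t^{\mathcal S}}$ via extension by zero.
   Context: Lattice: $D=\{x\in\mathbb Z^d:1\le x_i\le n\ \forall i\}$, $\partial D=\{p\in\mathbb Z^d:\min_{q\in D}\|q-p\|_{\ell^1}=1\}$; $E$ = unordered pairs $pq\subseteq D\cup\partial D$ with $\|p-q\|_{\ell^1}=1$, not both in $\partial D$; $\mathcal N(p)=\{q:pq\in E\}$. Conductivity $\gamma:E\to(0,\infty)$, symmetric. $S_\gamma\varphi$ is the unique $\mathbf u\in\mathbb R^{D\cup\partial D}$ with $\sum_{q\in\mathcal N(p)}\gamma_{pq}(\mathbf u_q-\mathbf u_p)=0$ for all $p\in D$ and $\mathbf u=\varphi$ on $\partial D$. Functions on subsets are extended by zero. With $s(x)=\sum_ix_i$: $L_t=\{x\in D:s(x)=t\}$, $K_t^+=\{x\in\partial D:s(x)=t,\max_ix_i=n+1\}$, $K_t^-=\{x\in\partial D:s(x)=t,\min_ix_i=0\}$, $K_t^{\mathcal S\pm}=\bigcup_{\ell\le t}K_\ell^\pm$, $J_t^{\mathcal S}=K_t^{\mathcal S-}\cup K_{t+1}^{\mathcal S+}$. $T_1^{(t)}:\mathbb R^{J_t^{\mathcal S}}\to\mathbb R^{L_{t+1}}$, $\varphi\mapsto(S_\gamma\varphi)|_{L_{t+1}}$.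 *)

theory Defs
  imports "HOL-Analysis.Analysis"
begin

text \<open>Points of Z^d are integer lists of length d.\<close>

definition l1dist :: "int list \<Rightarrow> int list \<Rightarrow> int" where
  "l1dist p q = (\<Sum>i<length p. \<bar>p ! i - q ! i\<bar>)"

definition Dom :: "nat \<Rightarrow> nat \<Rightarrow> int list set" where
  "Dom d n = {x. length x = d \<and> (\<forall>i<d. 1 \<le> x ! i \<and> x ! i \<le> int n)}"

definition bdry :: "nat \<Rightarrow> nat \<Rightarrow> int list set" where
  "bdry d n = {p. length p = d \<and> Min ((\<lambda>q. l1dist q p) ` Dom d n) = 1}"

definition Edges :: "nat \<Rightarrow> nat \<Rightarrow> int list set set" where
  "Edges d n = {{p, q} | p q. p \<in> Dom d n \<union> bdry d n \<and> q \<in> Dom d n \<union> bdry d n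
      \<and> l1dist p q = 1 \<and> \<not> (p \<in> bdry d n \<and> q \<in> bdry d n)}"

definition nbhd :: "nat \<Rightarrow> nat \<Rightarrow> int list \<Rightarrow> int list set" where
  "nbhd d n p = {q. {p, q} \<in> Edges d n}"

definition solveS :: "nat \<Rightarrow> nat \<Rightarrow> (int list set \<Rightarrow> real) \<Rightarrow> (int list \<Rightarrow> real) \<Rightarrow> (int list \<Rightarrow> real)" where
  "solveS d n \<gamma> \<phi> = (THE u.
      (\<forall>p \<in> Dom d n. (\<Sum>q \<in> nbhd d n p. \<gamma> {p, q} * (u q - u p)) = 0)
    \<and> (\<forall>p \<in> bdry d n. u p = \<phi> p)
    \<and> (\<forall>p. p \<notin> Dom d n \<union> bdry d n \<longrightarrow> u p = 0))"

definition ssum :: "int list \<Rightarrow> int" where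
  "ssum x = sum_list x"

definition Lset :: "nat \<Rightarrow> nat \<Rightarrow> int \<Rightarrow> int list set" where
  "Lset d n t = {x \<in> Dom d n. ssum x = t}"

definition Kplus :: "nat \<Rightarrow> nat \<Rightarrow> int \<Rightarrow> int list set" where
  "Kplus d n t = {x \<in> bdry d n. ssum x = t \<and> Max (set x) = int n + 1}"

definition Kminus :: "nat \<Rightarrow> nat \<Rightarrow> int \<Rightarrow> int list set" where
  "Kminus d n t = {x \<in> bdry d n. ssum x = t \<and> Min (set x) = 0}"

definition KSplus :: "nat \<Rightarrow> nat \<Rightarrow> int \<Rightarrow> int list set" where
  "KSplus d n t = (\<Union>l \<in> {l. l \<le> t}. Kplus d n l)"

definition KSminus :: "nat \<Rightarrow> nat \<Rightarrow> int \<Rightarrow> int list set" where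
  "KSminus d n t = (\<Union>l \<in> {l. l \<le> t}. Kminus d n l)"

definition JS :: "nat \<Rightarrow> nat \<Rightarrow> int \<Rightarrow> int list set" where
  "JS d n t = KSminus d n t \<union> KSplus d n (t + 1)"

text \<open>T_1^(t) : R^(J_t) -> R^(L_(t+1)); functions on subsets are extended by zero.\<close>
definition T1 :: "nat \<Rightarrow> nat \<Rightarrow> (int list set \<Rightarrow> real) \<Rightarrow> int \<Rightarrow> (int list \<Rightarrow> real) \<Rightarrow> (int list \<Rightarrow> real)" where
  "T1 d n \<gamma> t \<phi> = (\<lambda>x. if x \<in> Lset d n (t + 1) then solveS d n \<gamma> \<phi> x else 0)"

definition kerT1 :: "nat \<Rightarrow> nat \<Rightarrow> (int list set \<Rightarrow> real) \<Rightarrow> int \<Rightarrow> (int list \<Rightarrow> real) set" where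
  "kerT1 d n \<gamma> t = {\<phi>. (\<forall>x. x \<notin> JS d n t \<longrightarrow> \<phi> x = 0) \<and> T1 d n \<gamma> t \<phi> = (\<lambda>_. 0)}"

end

theory Submission
  imports Defs "HOL-Library.Function_Algebras"
begin

text \<open>Let \<open>\<phi>\<close> lie in the kernel of \<open>T\<^sub>1\<close> at level \<open>t - 1\<close> and \<open>u = S\<^sub>\<gamma> \<phi>\<close>; then \<open>u\<close>
  vanishes on the layer \<open>L\<^sub>t\<close>. A boundary point adjacent to the region
  \<open>{x \<in> D. s x > t}\<close> lies outside \<open>J\<^sub>t\<^sub>-\<^sub>1\<close>, so \<open>\<phi>\<close> vanishes there as well. Hence \<open>u\<close>
  is \<open>\<gamma>\<close>-harmonic on the region and zero on all its outer neighbours, and the maximum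
  principle gives \<open>u = 0\<close> on it, in particular on \<open>L\<^sub>t\<^sub>+\<^sub>1\<close>. The same maximum principle,
  combined with "injective implies surjective" for linear maps in finite dimension, makes the
  Dirichlet problem uniquely solvable, as the definite description in \<open>solveS\<close> requires.\<close>

section \<open>Injective linear maps on finitely supported functions\<close>

lemma (in vector_space) linear_inj_on_finite_span_imp_surj:
  assumes "Vector_Spaces.linear scale scale f" and fin: "finite E"
    and into: "f ` span E \<subseteq> span E" and inj: "inj_on f (span E)"
  shows "span E \<subseteq> f ` span E"
proof -
  interpret f: Vector_Spaces.linear scale scale f by fact
  obtain B where B: "B \<subseteq> span E" "independent B" "span E \<subseteq> span B"
    using basis_exists[of "span E"] by metis
  have span_B: "span B = span E"
    using B(3) span_minimal[OF B(1) subspace_span] by (rule subset_antisym[rotated])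
  have finB: "finite B"
    using independent_span_bound[OF fin B(2,1)] by simp
  have indep_fB: "independent (f ` B)"
    using f.independent_injective_image[OF B(2)] inj span_B by simp
  have card_fB: "card (f ` B) = card B"
    using card_image[OF inj_on_subset[OF inj B(1)]] .
  have fB: "f ` B \<subseteq> span B"
    using into B(1) span_B by (metis image_mono subset_trans)
  have "span E \<subseteq> span (f ` B)"
  proof
    fix b assume b: "b \<in> span E"
    show "b \<in> span (f ` B)"
    proof (rule ccontr)
      assume nb: "b \<notin> span (f ` B)"
      have "insert b (f ` B) \<subseteq> span B"
        using fB b span_B by simp
      then have "card (insert b (f ` B)) \<le> card B"
        using independent_span_bound[OF finB independent_insertI[OF nb indep_fB]] by simp
      moreover have "b \<notin> f ` B" using nb span_base by metis
      ultimately show False using card_fB finB by simp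
    qed
  qed
  then show ?thesis using f.span_image span_B by simp
qed

lemma sum_fun_apply: "(\<Sum>a\<in>A. G a) x = (\<Sum>a\<in>A. G a x)"
  by (induction A rule: infinite_finite_induct) auto

lemma finitely_supported_linear_inj_imp_surj:
  fixes F :: "('a \<Rightarrow> real) \<Rightarrow> 'a \<Rightarrow> real"
  assumes fin: "finite D"
    and add: "\<And>v w. F (v + w) = F v + F w"
    and scale: "\<And>c v. F (\<lambda>x. c * v x) = (\<lambda>x. c * F v x)"
    and supp: "\<And>v x. x \<notin> D \<Longrightarrow> F v x = 0"
    and inj: "\<And>v. \<forall>x. x \<notin> D \<longrightarrow> v x = 0 \<Longrightarrow> F v = 0 \<Longrightarrow> v = 0"
    and b: "\<forall>x. x \<notin> D \<longrightarrow> b x = 0"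
  shows "\<exists>v. (\<forall>x. x \<notin> D \<longrightarrow> v x = 0) \<and> F v = b"
proof -
  define sc :: "real \<Rightarrow> ('a \<Rightarrow> real) \<Rightarrow> 'a \<Rightarrow> real" where "sc = (\<lambda>c v x. c * v x)"
  interpret vs: vector_space sc
    by unfold_locales (auto simp: sc_def fun_eq_iff algebra_simps)
  interpret F: Vector_Spaces.linear sc sc F
    by unfold_locales (auto simp: sc_def add scale)
  define V where "V = {v :: 'a \<Rightarrow> real. \<forall>x. x \<notin> D \<longrightarrow> v x = 0}"
  define \<delta> :: "'a \<Rightarrow> 'a \<Rightarrow> real" where "\<delta> = (\<lambda>a y. if y = a then 1 else 0)"
  have "vs.subspace V"
    unfolding vs.subspace_def V_def by (auto simp: sc_def)
  then have "vs.span (\<delta> ` D) \<subseteq> V"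
    by (intro vs.span_minimal) (auto simp: \<delta>_def V_def)
  moreover have "V \<subseteq> vs.span (\<delta> ` D)"
  proof
    fix v assume "v \<in> V"
    then have "v = (\<Sum>a\<in>D. sc (v a) (\<delta> a))"
      using fin by (auto simp: fun_eq_iff sc_def \<delta>_def V_def sum_fun_apply if_distrib cong: if_cong)
    also have "\<dots> \<in> vs.span (\<delta> ` D)"
      by (intro vs.span_sum vs.span_scale vs.span_base) simp
    finally show "v \<in> vs.span (\<delta> ` D)" .
  qed
  ultimately have span_V: "vs.span (\<delta> ` D) = V" by (rule subset_antisym)
  have "inj_on F V"
  proof (rule inj_onI)
    fix v w assume "v \<in> V" "w \<in> V" "F v = F w"
    then have "v - w = 0"
      using inj[of "v - w"] F.diff by (simp add: V_def)
    then show "v = w" by simp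
  qed
  moreover have "F ` V \<subseteq> V" using supp by (auto simp: V_def)
  ultimately have "V \<subseteq> F ` V"
    using vs.linear_inj_on_finite_span_imp_surj[OF F.linear_axioms, of "\<delta> ` D"] fin span_V by simp
  moreover have "b \<in> V" using b by (simp add: V_def)
  ultimately have "b \<in> F ` V" by blast
  then show ?thesis by (auto simp: V_def)
qed

section \<open>A discrete maximum principle\<close>

text \<open>Among the maximisers of \<open>w\<close> pick \<open>p\<^sub>0\<close> with maximal \<open>f\<close>. By the mean value property
  all neighbours of \<open>p\<^sub>0\<close> are maximisers, including one with larger \<open>f\<close>; so it lies
  outside \<open>A\<close>, where \<open>w = 0\<close>.\<close>

lemma discrete_maximum_principle:
  fixes nb :: "'a \<Rightarrow> 'a set" and g :: "'a \<Rightarrow> 'a \<Rightarrow> real" and w :: "'a \<Rightarrow> real"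
    and f :: "'a \<Rightarrow> 'b::linorder"
  assumes finA: "finite A" and fin_nb: "\<And>p. p \<in> A \<Longrightarrow> finite (nb p)"
    and pos: "\<And>p q. p \<in> A \<Longrightarrow> q \<in> nb p \<Longrightarrow> 0 < g p q"
    and harmonic: "\<And>p. p \<in> A \<Longrightarrow> (\<Sum>q\<in>nb p. g p q * (w q - w p)) = 0"
    and outside: "\<And>p q. p \<in> A \<Longrightarrow> q \<in> nb p \<Longrightarrow> q \<notin> A \<Longrightarrow> w q = 0"
    and ascent: "\<And>p. p \<in> A \<Longrightarrow> \<exists>q\<in>nb p. f p < f q"
    and "p \<in> A"
  shows "w p \<le> 0"
proof (rule ccontr)
  assume "\<not> w p \<le> 0"
  define M where "M = Max (w ` A)"
  have le_M: "w q \<le> M" if "q \<in> A" for q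
    using finA that by (simp add: M_def)
  have M_pos: "0 < M" using le_M[OF \<open>p \<in> A\<close>] \<open>\<not> w p \<le> 0\<close> by simp
  define S where "S = {q \<in> A. w q = M}"
  have "M \<in> w ` A" using finA \<open>p \<in> A\<close> unfolding M_def by (intro Max_in) auto
  then have finS: "finite S" "S \<noteq> {}" using finA by (auto simp: S_def)
  have "Max (f ` S) \<in> f ` S" using finS by (intro Max_in) auto
  then obtain p\<^sub>0 where "p\<^sub>0 \<in> S" and f_p\<^sub>0: "f p\<^sub>0 = Max (f ` S)" by auto
  then have p\<^sub>0: "p\<^sub>0 \<in> A" "w p\<^sub>0 = M" by (auto simp: S_def)
  have nb_le: "w q \<le> w p\<^sub>0" if "q \<in> nb p\<^sub>0" for q
    using le_M outside[OF p\<^sub>0(1) that] M_pos p\<^sub>0(2) by (cases "q \<in> A") auto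
  have terms_nonneg: "0 \<le> g p\<^sub>0 q * (w p\<^sub>0 - w q)" if "q \<in> nb p\<^sub>0" for q
    using pos[OF p\<^sub>0(1) that] nb_le[OF that] by simp
  have "(\<Sum>q\<in>nb p\<^sub>0. g p\<^sub>0 q * (w p\<^sub>0 - w q)) = - (\<Sum>q\<in>nb p\<^sub>0. g p\<^sub>0 q * (w q - w p\<^sub>0))"
    by (simp add: sum_negf[symmetric] algebra_simps)
  then have "(\<Sum>q\<in>nb p\<^sub>0. g p\<^sub>0 q * (w p\<^sub>0 - w q)) = 0"
    using harmonic[OF p\<^sub>0(1)] by simp
  then have "\<forall>q\<in>nb p\<^sub>0. g p\<^sub>0 q * (w p\<^sub>0 - w q) = 0"
    by (simp add: sum_nonneg_eq_0_iff[OF fin_nb[OF p\<^sub>0(1)] terms_nonneg])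
  then have nb_max: "w q = M" if "q \<in> nb p\<^sub>0" for q
    using that pos[OF p\<^sub>0(1) that] p\<^sub>0(2) by auto
  obtain q where q: "q \<in> nb p\<^sub>0" "f p\<^sub>0 < f q" using ascent[OF p\<^sub>0(1)] by blast
  have "q \<in> A" using outside[OF p\<^sub>0(1) q(1)] nb_max[OF q(1)] M_pos by force
  then have "q \<in> S" using nb_max[OF q(1)] by (simp add: S_def)
  then have "f q \<le> f p\<^sub>0" using f_p\<^sub>0 finS(1) by simp
  then show False using q(2) by simp
qed

lemma discrete_harmonic_eq_0:
  fixes nb :: "'a \<Rightarrow> 'a set" and g :: "'a \<Rightarrow> 'a \<Rightarrow> real" and w :: "'a \<Rightarrow> real"
    and f :: "'a \<Rightarrow> 'b::linorder"
  assumes "finite A" and "\<And>p. p \<in> A \<Longrightarrow> finite (nb p)"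
    and "\<And>p q. p \<in> A \<Longrightarrow> q \<in> nb p \<Longrightarrow> 0 < g p q"
    and harmonic: "\<And>p. p \<in> A \<Longrightarrow> (\<Sum>q\<in>nb p. g p q * (w q - w p)) = 0"
    and outside: "\<And>p q. p \<in> A \<Longrightarrow> q \<in> nb p \<Longrightarrow> q \<notin> A \<Longrightarrow> w q = 0"
    and "\<And>p. p \<in> A \<Longrightarrow> \<exists>q\<in>nb p. f p < f q"
    and "p \<in> A"
  shows "w p = 0"
proof -
  have "w p \<le> 0" by (rule discrete_maximum_principle[OF assms])
  moreover have "- w p \<le> 0"
  proof (rule discrete_maximum_principle[where w = "\<lambda>x. - w x", OF assms(1-3) _ _ assms(6,7)])
    have "(\<Sum>q\<in>nb p. g p q * (- w q - - w p)) = - (\<Sum>q\<in>nb p. g p q * (w q - w p))" for p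
      by (simp add: sum_negf[symmetric] algebra_simps)
    then show "(\<Sum>q\<in>nb p. g p q * (- w q - - w p)) = 0" if "p \<in> A" for p
      using harmonic[OF that] by simp
  qed (use outside in auto)
  ultimately show ?thesis by simp
qed

section \<open>Geometry of the lattice\<close>

lemma l1dist_nonneg: "0 \<le> l1dist p q"
  by (simp add: l1dist_def sum_nonneg)

lemma l1dist_self [simp]: "l1dist p p = 0"
  by (simp add: l1dist_def)

lemma l1dist_commute: "length p = length q \<Longrightarrow> l1dist p q = l1dist q p"
  by (simp add: l1dist_def abs_minus_commute)

lemma l1dist_eq_0_iff:
  assumes "length p = length q"
  shows "l1dist p q = 0 \<longleftrightarrow> p = q"
proof
  assume "l1dist p q = 0"
  then have "\<forall>i\<in>{..<length p}. \<bar>p ! i - q ! i\<bar> = 0"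
    by (simp add: l1dist_def sum_nonneg_eq_0_iff)
  then show "p = q" using assms by (intro nth_equalityI) auto
qed simp

lemma l1dist_list_update:
  assumes "i < length p"
  shows "l1dist p (p[i := x]) = \<bar>p ! i - x\<bar>"
proof -
  have "l1dist p (p[i := x]) = (\<Sum>j<length p. if j = i then \<bar>p ! i - x\<bar> else 0)"
    unfolding l1dist_def by (intro sum.cong) (auto simp: nth_list_update)
  then show ?thesis using assms by (simp add: sum.delta)
qed

lemma l1dist_eq_1_imp_unit_step:
  assumes len: "length p = length q" and dist: "l1dist p q = 1"
  shows "\<exists>i<length p. q = p[i := p ! i + 1] \<or> q = p[i := p ! i - 1]"
proof -
  obtain i where i: "i < length p" "p ! i \<noteq> q ! i"
    using dist len nth_equalityI by force
  have "l1dist p q = \<bar>p ! i - q ! i\<bar> + (\<Sum>j\<in>{..<length p} - {i}. \<bar>p ! j - q ! j\<bar>)"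
    unfolding l1dist_def using i by (simp add: sum.remove)
  moreover have "0 \<le> (\<Sum>j\<in>{..<length p} - {i}. \<bar>p ! j - q ! j\<bar>)" by (simp add: sum_nonneg)
  moreover have "1 \<le> \<bar>p ! i - q ! i\<bar>" using i(2) by linarith
  ultimately have step: "\<bar>p ! i - q ! i\<bar> = 1"
    and rest: "(\<Sum>j\<in>{..<length p} - {i}. \<bar>p ! j - q ! j\<bar>) = 0"
    using dist by linarith+
  have "p ! j = q ! j" if "j < length p" "j \<noteq> i" for j
    using rest that by (simp add: sum_nonneg_eq_0_iff)
  then have "q = p[i := q ! i]" using len i(1) by (intro nth_equalityI) (auto simp: nth_list_update)
  moreover have "q ! i = p ! i + 1 \<or> q ! i = p ! i - 1" using step by linarith
  ultimately show ?thesis using i(1) by metis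
qed

lemma ssum_list_update: "i < length p \<Longrightarrow> ssum (p[i := x]) = ssum p + x - p ! i"
  unfolding ssum_def by (induction p arbitrary: i) (auto split: nat.split)

lemma finite_Dom: "finite (Dom d n)"
proof -
  have "Dom d n \<subseteq> {x. set x \<subseteq> {1..int n} \<and> length x = d}"
    by (auto simp: Dom_def in_set_conv_nth)
  then show ?thesis using finite_lists_length_eq[of "{1..int n}" d] finite_subset by blast
qed

lemma length_Dom_bdry: "x \<in> Dom d n \<union> bdry d n \<Longrightarrow> length x = d"
  by (auto simp: Dom_def bdry_def)

lemma Dom_notin_bdry:
  assumes "p \<in> Dom d n"
  shows "p \<notin> bdry d n"
proof -
  have "Min ((\<lambda>q. l1dist q p) ` Dom d n) = 0"
    using assms finite_Dom l1dist_nonneg by (intro Min_eqI) force+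
  then show ?thesis by (simp add: bdry_def)
qed

lemma bdryI:
  assumes "length q = d" "q \<notin> Dom d n" "p \<in> Dom d n" "l1dist p q = 1"
  shows "q \<in> bdry d n"
proof -
  have "1 \<le> l1dist r q" if "r \<in> Dom d n" for r
  proof -
    have "r \<noteq> q" using that assms(2) by auto
    then have "l1dist r q \<noteq> 0"
      using l1dist_eq_0_iff that assms(1) by (auto simp: Dom_def)
    then show ?thesis using l1dist_nonneg[of r q] by linarith
  qed
  then have "Min ((\<lambda>r. l1dist r q) ` Dom d n) = 1"
    using assms(3,4) finite_Dom by (intro Min_eqI) force+
  then show ?thesis using assms(1) by (simp add: bdry_def)
qed

lemma doubleton_in_Edges_iff:
  "{p, q} \<in> Edges d n \<longleftrightarrow> p \<in> Dom d n \<union> bdry d n \<and> q \<in> Dom d n \<union> bdry d n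
     \<and> l1dist p q = 1 \<and> \<not> (p \<in> bdry d n \<and> q \<in> bdry d n)"
proof
  assume "{p, q} \<in> Edges d n"
  then obtain p' q' where e: "{p, q} = {p', q'}" "p' \<in> Dom d n \<union> bdry d n"
      "q' \<in> Dom d n \<union> bdry d n" "l1dist p' q' = 1" "\<not> (p' \<in> bdry d n \<and> q' \<in> bdry d n)"
    unfolding Edges_def by blast
  then have "length p' = length q'" using length_Dom_bdry by metis
  then show "p \<in> Dom d n \<union> bdry d n \<and> q \<in> Dom d n \<union> bdry d n
     \<and> l1dist p q = 1 \<and> \<not> (p \<in> bdry d n \<and> q \<in> bdry d n)"
    using e l1dist_commute[of p' q'] by (auto simp: doubleton_eq_iff)
qed (auto simp: Edges_def)

lemma nbhd_Dom_iff:
  "p \<in> Dom d n \<Longrightarrow> q \<in> nbhd d n p \<longleftrightarrow> q \<in> Dom d n \<union> bdry d n \<and> l1dist p q = 1"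
  using Dom_notin_bdry[of p d n] by (auto simp: nbhd_def doubleton_in_Edges_iff)

lemma nbhd_Dom_unit_step:
  assumes "p \<in> Dom d n" "q \<in> nbhd d n p"
  shows "\<exists>i<d. q = p[i := p ! i + 1] \<or> q = p[i := p ! i - 1]"
proof -
  have "q \<in> Dom d n \<union> bdry d n" "l1dist p q = 1" using assms nbhd_Dom_iff by auto
  moreover have "length p = d" using assms(1) by (simp add: Dom_def)
  ultimately show ?thesis using l1dist_eq_1_imp_unit_step[of p q] length_Dom_bdry[of q d n] by auto
qed

lemma finite_nbhd_Dom: "p \<in> Dom d n \<Longrightarrow> finite (nbhd d n p)"
  by (rule finite_subset[of _ "(\<lambda>i. p[i := p ! i + 1]) ` {..<d} \<union> (\<lambda>i. p[i := p ! i - 1]) ` {..<d}"])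
    (use nbhd_Dom_unit_step in blast, simp)

lemma Dom_step_in_nbhd:
  assumes p: "p \<in> Dom d n" and i: "i < d"
  shows "p[i := p ! i + 1] \<in> nbhd d n p"
proof -
  let ?q = "p[i := p ! i + 1]"
  have len: "length p = d" using p by (simp add: Dom_def)
  then have dist: "l1dist p ?q = 1" using i by (simp add: l1dist_list_update)
  then have "?q \<in> Dom d n \<union> bdry d n" using bdryI[of ?q d n p] len p by auto
  then show ?thesis using nbhd_Dom_iff[OF p] dist by simp
qed

lemma nbhd_Dom_ssum:
  assumes "p \<in> Dom d n" "q \<in> nbhd d n p"
  shows "ssum q = ssum p + 1 \<or> (ssum q = ssum p - 1 \<and> (\<forall>x\<in>set q. x \<le> int n))"
proof -
  obtain i where i: "i < d" and q: "q = p[i := p ! i + 1] \<or> q = p[i := p ! i - 1]"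
    using nbhd_Dom_unit_step[OF assms] by blast
  have len: "length p = d" and le_n: "\<And>j. j < d \<Longrightarrow> p ! j \<le> int n"
    using assms(1) by (auto simp: Dom_def)
  show ?thesis
  proof (cases "q = p[i := p ! i + 1]")
    case True
    then show ?thesis using i len by (simp add: ssum_list_update)
  next
    case False
    then have "q = p[i := p ! i - 1]" using q by blast
    moreover have "\<forall>x\<in>set (p[i := p ! i - 1]). x \<le> int n"
      using le_n len i by (fastforce simp: in_set_conv_nth nth_list_update)
    ultimately show ?thesis using i len by (simp add: ssum_list_update)
  qed
qed

section \<open>The Dirichlet problem\<close>

definition lattice_laplacian ::
    "nat \<Rightarrow> nat \<Rightarrow> (int list set \<Rightarrow> real) \<Rightarrow> (int list \<Rightarrow> real) \<Rightarrow> int list \<Rightarrow> real" where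
  "lattice_laplacian d n \<gamma> u p = (\<Sum>q\<in>nbhd d n p. \<gamma> {p, q} * (u q - u p))"

definition dirichlet_solution ::
    "nat \<Rightarrow> nat \<Rightarrow> (int list set \<Rightarrow> real) \<Rightarrow> (int list \<Rightarrow> real) \<Rightarrow> (int list \<Rightarrow> real) \<Rightarrow> bool" where
  "dirichlet_solution d n \<gamma> \<phi> u \<longleftrightarrow>
      (\<forall>p\<in>Dom d n. lattice_laplacian d n \<gamma> u p = 0)
    \<and> (\<forall>p\<in>bdry d n. u p = \<phi> p)
    \<and> (\<forall>p. p \<notin> Dom d n \<union> bdry d n \<longrightarrow> u p = 0)"

lemma lattice_laplacian_add:
  "lattice_laplacian d n \<gamma> (u + v) p = lattice_laplacian d n \<gamma> u p + lattice_laplacian d n \<gamma> v p"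
  by (simp add: lattice_laplacian_def sum.distrib[symmetric] algebra_simps)

lemma lattice_laplacian_diff:
  "lattice_laplacian d n \<gamma> (\<lambda>x. u x - v x) p = lattice_laplacian d n \<gamma> u p - lattice_laplacian d n \<gamma> v p"
  by (simp add: lattice_laplacian_def sum_subtractf[symmetric] algebra_simps)

lemma lattice_laplacian_scale:
  "lattice_laplacian d n \<gamma> (\<lambda>x. c * u x) p = c * lattice_laplacian d n \<gamma> u p"
  by (simp add: lattice_laplacian_def sum_distrib_left algebra_simps)

lemma lattice_harmonic_eq_0:
  assumes d: "0 < d" and \<gamma>: "\<forall>e\<in>Edges d n. 0 < \<gamma> e" and A: "A \<subseteq> Dom d n"
    and harmonic: "\<And>p. p \<in> A \<Longrightarrow> lattice_laplacian d n \<gamma> w p = 0"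
    and outside: "\<And>p q. p \<in> A \<Longrightarrow> q \<in> nbhd d n p \<Longrightarrow> q \<notin> A \<Longrightarrow> w q = 0"
    and "p \<in> A"
  shows "w p = 0"
proof (rule discrete_harmonic_eq_0[where nb = "nbhd d n" and g = "\<lambda>p q. \<gamma> {p, q}"
      and f = "\<lambda>p. p ! 0"])
  show "finite A" using A finite_Dom finite_subset by blast
  show "\<exists>q\<in>nbhd d n p. p ! 0 < q ! 0" if "p \<in> A" for p
  proof
    have "p \<in> Dom d n" using that A by blast
    then show "p[0 := p ! 0 + 1] \<in> nbhd d n p" using Dom_step_in_nbhd d by blast
    show "p ! 0 < p[0 := p ! 0 + 1] ! 0" using \<open>p \<in> Dom d n\<close> d by (simp add: Dom_def)
  qed
  show "finite (nbhd d n p)" if "p \<in> A" for p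
    using that A finite_nbhd_Dom by blast
  show "0 < \<gamma> {p, q}" if "q \<in> nbhd d n p" for p q
    using that \<gamma> by (simp add: nbhd_def)
  show "(\<Sum>q\<in>nbhd d n p. \<gamma> {p, q} * (w q - w p)) = 0" if "p \<in> A" for p
    using harmonic[OF that] by (simp add: lattice_laplacian_def)
qed (use outside \<open>p \<in> A\<close> in auto)

lemma lattice_harmonic_zero_on_bdry_eq_0:
  assumes "0 < d" and "\<forall>e\<in>Edges d n. 0 < \<gamma> e"
    and "\<And>p. p \<in> Dom d n \<Longrightarrow> lattice_laplacian d n \<gamma> w p = 0"
    and "\<And>p. p \<in> bdry d n \<Longrightarrow> w p = 0"
    and "p \<in> Dom d n"
  shows "w p = 0"
proof (rule lattice_harmonic_eq_0[OF assms(1,2) order_refl assms(3) _ assms(5)])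
  show "w q = 0" if "p \<in> Dom d n" "q \<in> nbhd d n p" "q \<notin> Dom d n" for p q
    using that assms(4) nbhd_Dom_iff by blast
qed

text \<open>On functions supported in \<open>D\<close> the Laplacian is injective by the maximum principle,
  hence surjective; adding to the boundary data the \<open>v\<close> with \<open>\<Delta>v = -\<Delta>\<phi>\<^sub>b\<close> solves the
  problem.\<close>

lemma dirichlet_solution_exists:
  assumes d: "0 < d" and \<gamma>: "\<forall>e\<in>Edges d n. 0 < \<gamma> e"
  shows "\<exists>u. dirichlet_solution d n \<gamma> \<phi> u"
proof -
  define F where "F = (\<lambda>v p. if p \<in> Dom d n then lattice_laplacian d n \<gamma> v p else 0)"
  define \<phi>\<^sub>b where "\<phi>\<^sub>b = (\<lambda>x. if x \<in> bdry d n then \<phi> x else 0)"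
  have "\<exists>v. (\<forall>x. x \<notin> Dom d n \<longrightarrow> v x = 0) \<and> F v = - F \<phi>\<^sub>b"
  proof (rule finitely_supported_linear_inj_imp_surj[OF finite_Dom])
    show "v = 0" if supp: "\<forall>x. x \<notin> Dom d n \<longrightarrow> v x = 0" and "F v = 0" for v
    proof
      fix x
      have "lattice_laplacian d n \<gamma> v p = 0" if "p \<in> Dom d n" for p
        using fun_cong[OF \<open>F v = 0\<close>, of p] that by (simp add: F_def)
      moreover have "v p = 0" if "p \<in> bdry d n" for p
        using supp Dom_notin_bdry that by blast
      ultimately show "v x = 0 x"
        using lattice_harmonic_zero_on_bdry_eq_0[OF d \<gamma>] supp by (cases "x \<in> Dom d n") auto
    qed
  qed (auto simp: F_def fun_eq_iff lattice_laplacian_add lattice_laplacian_scale)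
  then obtain v where supp: "\<forall>x. x \<notin> Dom d n \<longrightarrow> v x = 0" and "F v = - F \<phi>\<^sub>b" by blast
  have "F (\<phi>\<^sub>b + v) = F \<phi>\<^sub>b + F v"
    by (simp add: F_def fun_eq_iff lattice_laplacian_add)
  then have "F (\<phi>\<^sub>b + v) = 0" using \<open>F v = - F \<phi>\<^sub>b\<close> by simp
  have "dirichlet_solution d n \<gamma> \<phi> (\<phi>\<^sub>b + v)"
    unfolding dirichlet_solution_def
  proof (intro conjI ballI allI impI)
    fix p assume "p \<in> Dom d n"
    then show "lattice_laplacian d n \<gamma> (\<phi>\<^sub>b + v) p = 0"
      using fun_cong[OF \<open>F (\<phi>\<^sub>b + v) = 0\<close>, of p] by (simp add: F_def)
  next
    fix p assume "p \<in> bdry d n"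
    then have "p \<notin> Dom d n" using Dom_notin_bdry by blast
    then show "(\<phi>\<^sub>b + v) p = \<phi> p" using \<open>p \<in> bdry d n\<close> supp by (simp add: \<phi>\<^sub>b_def)
  next
    fix p assume "p \<notin> Dom d n \<union> bdry d n"
    then show "(\<phi>\<^sub>b + v) p = 0" using supp by (simp add: \<phi>\<^sub>b_def)
  qed
  then show ?thesis by blast
qed

lemma dirichlet_solution_unique:
  assumes d: "0 < d" and \<gamma>: "\<forall>e\<in>Edges d n. 0 < \<gamma> e"
    and u: "dirichlet_solution d n \<gamma> \<phi> u" and v: "dirichlet_solution d n \<gamma> \<phi> v"
  shows "u = v"
proof
  fix x
  have "u x - v x = 0" if "x \<in> Dom d n"
  proof (rule lattice_harmonic_zero_on_bdry_eq_0[OF d \<gamma> _ _ that])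
    show "lattice_laplacian d n \<gamma> (\<lambda>x. u x - v x) p = 0" if "p \<in> Dom d n" for p
      using u v that by (simp add: dirichlet_solution_def lattice_laplacian_diff)
    show "u p - v p = 0" if "p \<in> bdry d n" for p
      using u v that by (simp add: dirichlet_solution_def)
  qed
  moreover have "u x = v x" if "x \<notin> Dom d n"
    using u v that by (cases "x \<in> bdry d n") (simp_all add: dirichlet_solution_def)
  ultimately show "u x = v x" by force
qed

lemma solveS_dirichlet_solution:
  assumes "0 < d" and "\<forall>e\<in>Edges d n. 0 < \<gamma> e"
  shows "dirichlet_solution d n \<gamma> \<phi> (solveS d n \<gamma> \<phi>)"
proof -
  have "solveS d n \<gamma> \<phi> = (THE u. dirichlet_solution d n \<gamma> \<phi> u)"
    unfolding solveS_def dirichlet_solution_def lattice_laplacian_def ..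
  then show ?thesis
    using theI'[OF ex_ex1I[OF dirichlet_solution_exists[OF assms] dirichlet_solution_unique[OF assms]]]
    by simp
qed

section \<open>Vanishing above a layer\<close>

lemma JS_mono: "s \<le> t \<Longrightarrow> JS d n s \<subseteq> JS d n t"
  by (auto simp: JS_def KSminus_def KSplus_def)

text \<open>A boundary neighbour of a point above the layer \<open>L\<^sub>t\<close> lies in \<open>K\<^sup>-\<close> only at level
  \<open>\<ge> t\<close>, and in \<open>K\<^sup>+\<close> only at level \<open>\<ge> t + 2\<close>: a step down keeps all entries \<open>\<le> n\<close>.\<close>

lemma bdry_nbhd_above_notin_JS:
  assumes d: "0 < d" and p: "p \<in> Dom d n" and above: "t < ssum p"
    and q: "q \<in> nbhd d n p" "q \<in> bdry d n"
  shows "q \<notin> JS d n (t - 1)"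
proof
  assume "q \<in> JS d n (t - 1)"
  then consider (minus) l where "l \<le> t - 1" "q \<in> Kminus d n l"
    | (plus) l where "l \<le> t" "q \<in> Kplus d n l"
    by (auto simp: JS_def KSminus_def KSplus_def)
  then show False
  proof cases
    case minus
    then show False using nbhd_Dom_ssum[OF p q(1)] above by (auto simp: Kminus_def)
  next
    case plus
    then have max: "Max (set q) = int n + 1" and "ssum q \<le> t" by (auto simp: Kplus_def)
    then have le_n: "\<forall>x\<in>set q. x \<le> int n" using nbhd_Dom_ssum[OF p q(1)] above by auto
    have "length q = d" using q(2) length_Dom_bdry by blast
    then have "Max (set q) \<in> set q" using d by (intro Max_in) auto
    then show False using le_n max by fastforce
  qed
qed

lemma solveS_eq_0_above_layer:
  assumes d: "0 < d" and \<gamma>: "\<forall>e\<in>Edges d n. 0 < \<gamma> e"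
    and supp: "\<forall>x. x \<notin> JS d n (t - 1) \<longrightarrow> \<phi> x = 0"
    and layer: "\<forall>y\<in>Lset d n t. solveS d n \<gamma> \<phi> y = 0"
    and x: "x \<in> Dom d n" "t < ssum x"
  shows "solveS d n \<gamma> \<phi> x = 0"
proof (rule lattice_harmonic_eq_0[OF d \<gamma>, where A = "{x \<in> Dom d n. t < ssum x}"])
  let ?u = "solveS d n \<gamma> \<phi>"
  have u: "dirichlet_solution d n \<gamma> \<phi> ?u" by (rule solveS_dirichlet_solution[OF d \<gamma>])
  show "lattice_laplacian d n \<gamma> ?u p = 0" if "p \<in> {x \<in> Dom d n. t < ssum x}" for p
    using u that by (simp add: dirichlet_solution_def)
  show "?u q = 0" if p: "p \<in> {x \<in> Dom d n. t < ssum x}" and q: "q \<in> nbhd d n p"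
    and q_below: "q \<notin> {x \<in> Dom d n. t < ssum x}" for p q
  proof (cases "q \<in> Dom d n")
    case True
    then have "q \<in> Lset d n t"
      using nbhd_Dom_ssum[of p d n q] p q q_below by (auto simp: Lset_def)
    then show ?thesis using layer by blast
  next
    case False
    then have "q \<in> bdry d n" using q p nbhd_Dom_iff by blast
    moreover have "q \<notin> JS d n (t - 1)"
      using bdry_nbhd_above_notin_JS[OF d _ _ q] \<open>q \<in> bdry d n\<close> p by blast
    ultimately show ?thesis using u supp by (simp add: dirichlet_solution_def)
  qed
qed (use x in auto)

theorem proposition2p3:
  fixes d n :: nat and \<gamma> :: "int list set \<Rightarrow> real" and t :: int
  assumes "d \<ge> 2" and "n \<ge> 1"
    and "\<forall>e \<in> Edges d n. \<gamma> e > 0"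
    and "int d \<le> t" and "t \<le> int d * int n - 1"
  shows "kerT1 d n \<gamma> (t - 1) \<subseteq> kerT1 d n \<gamma> t"
proof
  fix \<phi> assume "\<phi> \<in> kerT1 d n \<gamma> (t - 1)"
  then have supp: "\<forall>x. x \<notin> JS d n (t - 1) \<longrightarrow> \<phi> x = 0"
    and T_prev: "T1 d n \<gamma> (t - 1) \<phi> = (\<lambda>_. 0)" by (auto simp: kerT1_def)
  have layer: "\<forall>y\<in>Lset d n t. solveS d n \<gamma> \<phi> y = 0"
    using fun_cong[OF T_prev] by (metis (full_types) T1_def diff_add_cancel)
  have d: "0 < d" using \<open>d \<ge> 2\<close> by simp
  have "solveS d n \<gamma> \<phi> x = 0" if "x \<in> Lset d n (t + 1)" for x
    using solveS_eq_0_above_layer[OF d \<open>\<forall>e \<in> Edges d n. \<gamma> e > 0\<close> supp layer] that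
    by (simp add: Lset_def)
  then have "T1 d n \<gamma> t \<phi> = (\<lambda>_. 0)" by (simp add: T1_def fun_eq_iff)
  moreover have "\<forall>x. x \<notin> JS d n t \<longrightarrow> \<phi> x = 0"
    using supp JS_mono[of "t - 1" t d n] by auto
  ultimately show "\<phi> \<in> kerT1 d n \<gamma> t" by (simp add: kerT1_def)
qed

end
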